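(* Let $\Delta$ be a finite, flag, simply connected simplicial complex, with $\mathcal{P}_H$, $L$ and $\Phi_n$ as in the context. Let $e\cdot f\cdot g$ be a combinatorial 1-cycle in $\Delta$. Then for every $n\in\mathbb{Z}$, $\mathrm{Area}_{\mathcal{P}_H}\big(\Phi_n(efg)\big)\le 3|n|^2+(3L+6)|n|+3$.
   Context: $\mathrm{Edge}(\Delta)$ is the set of directed edges of $\Delta$; for $e$ in it, $\iota e$, $\tau e$ are its initial and terminal vertices and $\overline{e}$ is the reversed edge. $e_1\cdot\ldots\cdot e_l$ is a combinatorial path if $\tau e_i=\iota e_{i+1}$, and a combinatorial 1-cycle if also $\tau e_l=\iota e_1$. $\mathcal{P}_H=\langle\mathrm{Edge}(\Delta)\mid\mathcal{R}_H\rangle$ where $\mathcal{R}_H$ consists of the words $e\overline{e}$ ($e\in\mathrm{Edge}(\Delta)$) and $efg$, $e^{-1}f^{-1}g^{-1}$ for every combinatorial 1-cycle $e\cdot f\cdot g$. $\mathrm{Area}_{\mathcal{P}_H}(w)$ is the least $m$ such that $w$ is freely equal to $\prod_{i=1}^m x_ir_ix_i^{-1}$ with $r_i\in\mathcal{R}_H^{\pm1}$. For a letter $e$ and $m\in\mathbb{Z}$, $e^m$ is the word of $m$ copies of $e$ if $m\ge0$ and $|m|$ copies of $e^{-1}$ if $m<0$. Fix a vertex $q$ and a spanning tree $T$ of the 1-skeleton of $\Delta$; $p_n(u,v)=e_1^n\cdots e_l^n$ where $e_1\cdot\ldots\cdot e_l$ is the unique geodesic combinatorial path in $T$ from $u$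 to $v$. $L$ is the maximum over vertices $u,v$ of their edge-path distance in $T$. $\Phi_n$ ($n\in\mathbb{Z}$) is the endomorphism of the free monoid on $\mathrm{Edge}(\Delta)^{\pm1}$ with $\Phi_n(e)=p_n(q,\iota e)\,e^{n+1}\,p_n(\tau e,q)$ and $\Phi_n(e^{-1})=\Phi_n(e)^{-1}$ (formal inverse word). *)

theory Defs
  imports "HOL-Analysis.Analysis" "HOL-Library.Extended_Nat"
begin

definition simplicial_complex :: "'v set set \<Rightarrow> bool" where
  "simplicial_complex \<Delta> \<longleftrightarrow>
     (\<forall>\<sigma>\<in>\<Delta>. finite \<sigma> \<and> \<sigma> \<noteq> {}) \<and>
     (\<forall>\<sigma>\<in>\<Delta>. \<forall>\<tau>. \<tau> \<subseteq> \<sigma> \<and> \<tau> \<noteq> {} \<longrightarrow> \<tau> \<in> \<Delta>)"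

definition vertices :: "'v set set \<Rightarrow> 'v set" where
  "vertices \<Delta> = {v. {v} \<in> \<Delta>}"

definition flag :: "'v set set \<Rightarrow> bool" where
  "flag \<Delta> \<longleftrightarrow> (\<forall>\<sigma>. finite \<sigma> \<and> \<sigma> \<noteq> {} \<and> \<sigma> \<subseteq> vertices \<Delta> \<and>
                 (\<forall>u\<in>\<sigma>. \<forall>v\<in>\<sigma>. u \<noteq> v \<longrightarrow> {u, v} \<in> \<Delta>) \<longrightarrow> \<sigma> \<in> \<Delta>)"

definition realization :: "('v::finite) set set \<Rightarrow> (real ^ 'v) set" where
  "realization \<Delta> = (\<Union>\<sigma>\<in>\<Delta>. convex hull ((\<lambda>v. axis v (1::real)) ` \<sigma>))"

type_synonym 'v edge = "'v \<times> 'v"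

definition Edge :: "'v set set \<Rightarrow> 'v edge set" where
  "Edge \<Delta> = {(u, v). u \<noteq> v \<and> {u, v} \<in> \<Delta>}"

abbreviation iota :: "'v edge \<Rightarrow> 'v" where "iota e \<equiv> fst e"
abbreviation tau :: "'v edge \<Rightarrow> 'v" where "tau e \<equiv> snd e"
definition rev_edge :: "'v edge \<Rightarrow> 'v edge" where "rev_edge e = (snd e, fst e)"

fun chain :: "'v edge list \<Rightarrow> bool" where
  "chain [] = True"
| "chain [e] = True"
| "chain (e # f # es) = (tau e = iota f \<and> chain (f # es))"

definition edge_path :: "'v edge set \<Rightarrow> 'v \<Rightarrow> 'v \<Rightarrow> 'v edge list \<Rightarrow> bool" where
  "edge_path E u v es \<longleftrightarrow> set es \<subseteq> E \<and> chain es \<and>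
     (if es = [] then u = v else iota (hd es) = u \<and> tau (last es) = v)"

definition comb_cycle3 :: "'v set set \<Rightarrow> 'v edge \<Rightarrow> 'v edge \<Rightarrow> 'v edge \<Rightarrow> bool" where
  "comb_cycle3 \<Delta> e f g \<longleftrightarrow> e \<in> Edge \<Delta> \<and> f \<in> Edge \<Delta> \<and> g \<in> Edge \<Delta> \<and>
     tau e = iota f \<and> tau f = iota g \<and> tau g = iota e"

fun no_backtrack :: "'v edge list \<Rightarrow> bool" where
  "no_backtrack [] = True"
| "no_backtrack [e] = True"
| "no_backtrack (e # f # es) = (f \<noteq> rev_edge e \<and> no_backtrack (f # es))"

definition spanning_tree :: "'v set set \<Rightarrow> 'v edge set \<Rightarrow> bool" where
  "spanning_tree \<Delta> T \<longleftrightarrow> T \<subseteq> Edge \<Delta> \<and> (\<forall>e\<in>T. rev_edge e \<in> T) \<and>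
     (\<forall>u\<in>vertices \<Delta>. \<forall>v\<in>vertices \<Delta>. \<exists>es. edge_path T u v es) \<and>
     (\<forall>u es. edge_path T u u es \<and> es \<noteq> [] \<longrightarrow> \<not> no_backtrack es)"

definition tree_geod :: "'v edge set \<Rightarrow> 'v \<Rightarrow> 'v \<Rightarrow> 'v edge list" where
  "tree_geod T u v = (THE es. edge_path T u v es \<and>
      (\<forall>es'. edge_path T u v es' \<longrightarrow> length es \<le> length es'))"

definition tree_diam :: "'v set set \<Rightarrow> 'v edge set \<Rightarrow> nat" where
  "tree_diam \<Delta> T = Max {length (tree_geod T u v) | u v. u \<in> vertices \<Delta> \<and> v \<in> vertices \<Delta>}"

text \<open>A letter is (e, True) for e and (e, False) for the formal inverse of e.\<close>
type_synonym 'a word = "('a \<times> bool) list"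

definition inv_word :: "'a word \<Rightarrow> 'a word" where
  "inv_word w = rev (map (\<lambda>(x, b). (x, \<not> b)) w)"

definition lpow :: "'a \<Rightarrow> int \<Rightarrow> 'a word" where
  "lpow x m = (if m \<ge> 0 then replicate (nat m) (x, True) else replicate (nat (- m)) (x, False))"

definition cancel_step :: "'a word \<Rightarrow> 'a word \<Rightarrow> bool" where
  "cancel_step w w' \<longleftrightarrow> (\<exists>xs ys x b. w = xs @ [(x, b), (x, \<not> b)] @ ys \<and> w' = xs @ ys)"

definition freely_eq :: "'a word \<Rightarrow> 'a word \<Rightarrow> bool" where
  "freely_eq = (sup cancel_step cancel_step\<inverse>\<inverse>)\<^sup>*\<^sup>*"

definition relators_H :: "'v set set \<Rightarrow> 'v edge word set" where
  "relators_H \<Delta> = {[(e, True), (rev_edge e, True)] | e. e \<in> Edge \<Delta>}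
     \<union> {[(e, True), (f, True), (g, True)] | e f g. comb_cycle3 \<Delta> e f g}
     \<union> {[(e, False), (f, False), (g, False)] | e f g. comb_cycle3 \<Delta> e f g}"

definition area_decomp :: "'a word set \<Rightarrow> 'a word \<Rightarrow> nat \<Rightarrow> bool" where
  "area_decomp R w m \<longleftrightarrow> (\<exists>cs. length cs = m \<and>
      (\<forall>(x, r)\<in>set cs. r \<in> R \<or> inv_word r \<in> R) \<and>
      freely_eq w (concat (map (\<lambda>(x, r). x @ r @ inv_word x) cs)))"

text \<open>Area (infinite if w is not null-homotopic).\<close>
definition Area :: "'a word set \<Rightarrow> 'a word \<Rightarrow> enat" where
  "Area R w = (INF m \<in> {m. area_decomp R w m}. enat m)"

definition p_path :: "'v edge set \<Rightarrow> int \<Rightarrow> 'v \<Rightarrow> 'v \<Rightarrow> 'v edge word" where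
  "p_path T n u v = concat (map (\<lambda>e. lpow e n) (tree_geod T u v))"

definition Phi_letter :: "'v edge set \<Rightarrow> 'v \<Rightarrow> int \<Rightarrow> 'v edge \<times> bool \<Rightarrow> 'v edge word" where
  "Phi_letter T q n l = (let e = fst l;
       w = p_path T n q (iota e) @ lpow e (n + 1) @ p_path T n (tau e) q
     in if snd l then w else inv_word w)"

definition Phi :: "'v edge set \<Rightarrow> 'v \<Rightarrow> int \<Rightarrow> 'v edge word \<Rightarrow> 'v edge word" where
  "Phi T q n w = concat (map (Phi_letter T q n) w)"

end

theory Submission
  imports Defs
begin

text \<open>
  Unfolding the definitions, Phi_n(efg) is e^(n+1) f^(n+1) g^(n+1), conjugated by the tree
  word from q to the initial vertex of e, with a tree word p followed by the tree word of the
  reversed path inserted after e^(n+1) and after f^(n+1); this uses that geodesics in a tree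
  are unique. Such an insertion x1^n ... xl^n (xl')^n ... (x1')^n collapses using |n| l
  relators x x'. The word e^k f^k g^k bounds a disc of k^2 triangles: since g e f is again a
  1-cycle, the relators efg and g^-1 e^-1 f^-1 give ef = g^-1 = fe at cost 2, so moving one e
  past f^k and closing one triangle costs 2k + 1. This gives the area bound
  (|n| + 1)^2 + 3 |n| L.
\<close>

lemma freely_eq_symclp: "freely_eq = (symclp cancel_step)\<^sup>*\<^sup>*"
  by (simp add: freely_eq_def symclp_pointfree)

lemma freely_eq_refl [simp]: "freely_eq w w"
  by (simp add: freely_eq_def)

lemma freely_eq_trans [trans]: "freely_eq u v \<Longrightarrow> freely_eq v w \<Longrightarrow> freely_eq u w"
  unfolding freely_eq_def by (rule rtranclp_trans)

lemma freely_eq_sym [sym]: "freely_eq u v \<Longrightarrow> freely_eq v u"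
  unfolding freely_eq_symclp by (rule rtranclp_symclp_sym)

lemma freely_eq_cancel: "freely_eq (xs @ (x, b) # (x, \<not> b) # ys) (xs @ ys)"
  unfolding freely_eq_def by (rule r_into_rtranclp) (auto simp: cancel_step_def)

lemma freely_eq_append_context:
  assumes "freely_eq w w'"
  shows "freely_eq (a @ w @ c) (a @ w' @ c)"
proof -
  have "cancel_step u v \<Longrightarrow> cancel_step (a @ u @ c) (a @ v @ c)" for u v
    unfolding cancel_step_def by (metis append.assoc)
  then have step: "symclp cancel_step u v \<Longrightarrow> symclp cancel_step (a @ u @ c) (a @ v @ c)" for u v
    by (auto elim!: symclpE intro: symclpI)
  from assms show ?thesis
    unfolding freely_eq_symclp
    by (induction rule: rtranclp_induct) (auto intro: rtranclp.rtrancl_into_rtrancl step)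
qed

lemma inv_word_Nil [simp]: "inv_word [] = []"
  and inv_word_Cons [simp]: "inv_word ((x, b) # w) = inv_word w @ [(x, \<not> b)]"
  and inv_word_append [simp]: "inv_word (u @ v) = inv_word v @ inv_word u"
  by (auto simp: inv_word_def)

lemma inv_word_inv_word [simp]: "inv_word (inv_word w) = w"
  by (simp add: inv_word_def rev_map comp_def case_prod_beta)

lemma freely_eq_append_inv_word: "freely_eq (w @ inv_word w) []"
proof (induction w)
  case (Cons l w)
  obtain x b where l: "l = (x, b)" by fastforce
  have "freely_eq ([l] @ (w @ inv_word w) @ [(x, \<not> b)]) ([l] @ [] @ [(x, \<not> b)])"
    using Cons.IH by (rule freely_eq_append_context)
  also have "freely_eq \<dots> []"
    using freely_eq_cancel[of "[]" x b "[]"] by (simp add: l)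
  finally show ?case by (simp add: l)
qed simp

lemma freely_eq_inv_word_append: "freely_eq (inv_word w @ w) []"
  using freely_eq_append_inv_word[of "inv_word w"] by simp

definition conjugate_product :: "('a word \<times> 'a word) list \<Rightarrow> 'a word" where
  "conjugate_product cs = concat (map (\<lambda>(x, r). x @ r @ inv_word x) cs)"

lemma area_decomp_iff:
  "area_decomp R w m \<longleftrightarrow> (\<exists>cs. length cs = m \<and> (\<forall>(x, r)\<in>set cs. r \<in> R \<or> inv_word r \<in> R) \<and>
      freely_eq w (conjugate_product cs))"
  unfolding area_decomp_def conjugate_product_def ..

lemma freely_eq_conjugate_conjugate_product:
  "freely_eq (x @ conjugate_product cs @ inv_word x) (conjugate_product (map (\<lambda>(z, r). (x @ z, r)) cs))"
proof (induction cs)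
  case Nil
  show ?case using freely_eq_append_inv_word[of x] by (simp add: conjugate_product_def)
next
  case (Cons zr cs)
  obtain z r where zr: "zr = (z, r)" by fastforce
  let ?C = "conjugate_product cs"
  have "freely_eq (x @ conjugate_product (zr # cs) @ inv_word x)
      ((x @ z @ r @ inv_word z) @ (inv_word x @ x) @ (?C @ inv_word x))"
    using freely_eq_append_context[OF freely_eq_inv_word_append,
        of "x @ z @ r @ inv_word z" x "?C @ inv_word x"]
    by (simp add: zr conjugate_product_def freely_eq_sym)
  also have "freely_eq \<dots>
      ((x @ z @ r @ inv_word (x @ z)) @ conjugate_product (map (\<lambda>(z, r). (x @ z, r)) cs) @ [])"
    using freely_eq_append_context[OF Cons.IH, of "x @ z @ r @ inv_word z @ inv_word x" "[]"] by simp
  finally show ?case by (simp add: zr conjugate_product_def)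
qed

lemma area_decomp_insert:
  assumes "area_decomp R w m1" and "area_decomp R (x @ y) m2"
  shows "area_decomp R (x @ w @ y) (m1 + m2)"
proof -
  obtain cs1 where cs1: "length cs1 = m1" "\<forall>(x, r)\<in>set cs1. r \<in> R \<or> inv_word r \<in> R"
    "freely_eq w (conjugate_product cs1)" using assms(1) unfolding area_decomp_iff by blast
  obtain cs2 where cs2: "length cs2 = m2" "\<forall>(x, r)\<in>set cs2. r \<in> R \<or> inv_word r \<in> R"
    "freely_eq (x @ y) (conjugate_product cs2)" using assms(2) unfolding area_decomp_iff by blast
  let ?cs = "map (\<lambda>(z, r). (x @ z, r)) cs1 @ cs2"
  have "freely_eq (x @ w @ y) (x @ conjugate_product cs1 @ y)"
    using freely_eq_append_context[OF cs1(3)] .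
  also have "freely_eq \<dots> ((x @ conjugate_product cs1 @ inv_word x) @ x @ y)"
    using freely_eq_append_context[OF freely_eq_inv_word_append, of "x @ conjugate_product cs1" x y]
    by (simp add: freely_eq_sym)
  also have "freely_eq \<dots> (conjugate_product (map (\<lambda>(z, r). (x @ z, r)) cs1) @ x @ y)"
    using freely_eq_append_context[OF freely_eq_conjugate_conjugate_product[of x cs1], of "[]" "x @ y"]
    by simp
  also have "freely_eq \<dots> (conjugate_product (map (\<lambda>(z, r). (x @ z, r)) cs1) @ conjugate_product cs2)"
    using freely_eq_append_context[OF cs2(3), of "conjugate_product (map (\<lambda>(z, r). (x @ z, r)) cs1)" "[]"]
    by simp
  finally have "freely_eq (x @ w @ y) (conjugate_product ?cs)" by (simp add: conjugate_product_def)
  moreover have "\<forall>(x, r)\<in>set ?cs. r \<in> R \<or> inv_word r \<in> R" using cs1(2) cs2(2) by auto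
  ultimately show ?thesis unfolding area_decomp_iff using cs1(1) cs2(1) by (intro exI[of _ ?cs]) simp
qed

lemma Area_le_enat_iff: "Area R w \<le> enat B \<longleftrightarrow> (\<exists>m\<le>B. area_decomp R w m)"
proof
  assume "Area R w \<le> enat B"
  then have "(INF m \<in> {m. area_decomp R w m}. enat m) < enat (Suc B)"
    unfolding Area_def by (simp add: le_less_trans)
  then show "\<exists>m\<le>B. area_decomp R w m" by (auto simp: INF_less_iff less_Suc_eq_le)
next
  assume "\<exists>m\<le>B. area_decomp R w m"
  then show "Area R w \<le> enat B" unfolding Area_def by (auto intro: INF_lower2)
qed

lemma Area_insert: "Area R (x @ w @ y) \<le> Area R w + Area R (x @ y)"
proof (cases "Area R w = \<infinity> \<or> Area R (x @ y) = \<infinity>")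
  case False
  then obtain B1 B2 where B: "Area R w = enat B1" "Area R (x @ y) = enat B2" by force
  then obtain m1 m2 where "m1 \<le> B1" "area_decomp R w m1" "m2 \<le> B2" "area_decomp R (x @ y) m2"
    using Area_le_enat_iff order_refl by metis
  then have "\<exists>m\<le>B1 + B2. area_decomp R (x @ w @ y) m"
    by (intro exI[of _ "m1 + m2"]) (simp add: add_mono area_decomp_insert)
  then show ?thesis unfolding B by (simp add: Area_le_enat_iff)
qed auto

lemma Area_Nil: "Area R [] = 0"
proof -
  have "area_decomp R [] 0" by (simp add: area_decomp_iff conjugate_product_def)
  then show ?thesis using Area_le_enat_iff[of R "[]" 0] by (simp add: zero_enat_def[symmetric])
qed

lemma Area_relator: "r \<in> R \<or> inv_word r \<in> R \<Longrightarrow> Area R r \<le> 1"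
  unfolding one_enat_def Area_le_enat_iff area_decomp_iff
  by (auto intro!: exI[of _ "[([], r)]"] simp: conjugate_product_def)

lemma area_decomp_freely_eq: "freely_eq w w' \<Longrightarrow> area_decomp R w' m \<Longrightarrow> area_decomp R w m"
  unfolding area_decomp_def using freely_eq_trans by blast

lemma Area_freely_eq:
  assumes "freely_eq w w'"
  shows "Area R w = Area R w'"
proof -
  have "area_decomp R w = area_decomp R w'"
    using area_decomp_freely_eq assms freely_eq_sym by blast
  then show ?thesis by (simp add: Area_def)
qed

lemma Area_insert_relator:
  "r \<in> R \<or> inv_word r \<in> R \<Longrightarrow> Area R (x @ r @ y) \<le> Area R (x @ y) + 1"
  using Area_insert[of R x r y] Area_relator[of r R] by (metis add.commute add_left_mono order_trans)

lemma Area_cancel: "Area R (xs @ (x, b) # (x, \<not> b) # ys) = Area R (xs @ ys)"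
  by (rule Area_freely_eq[OF freely_eq_cancel])

lemma Area_commute:
  assumes "[(x, b), (y, b), (z, b)] \<in> R" and "[(z, \<not> b), (x, \<not> b), (y, \<not> b)] \<in> R"
  shows "Area R (a @ (x, b) # (y, b) # c) \<le> Area R (a @ (y, b) # (x, b) # c) + 2"
proof -
  have "Area R (a @ (x, b) # (y, b) # c) = Area R (a @ (x, b) # (y, b) # (x, \<not> b) # (x, b) # c)"
    using Area_cancel[of R "a @ [(x, b), (y, b)]" x "\<not> b" c] by simp
  also have "\<dots> = Area R (a @ (x, b) # (y, b) # (x, \<not> b) # (y, \<not> b) # (y, b) # (x, b) # c)"
    using Area_cancel[of R "a @ [(x, b), (y, b), (x, \<not> b)]" y "\<not> b" "(x, b) # c"] by simp
  also have "\<dots> = Area R (a @ [(x, b), (y, b), (z, b)] @ [(z, \<not> b), (x, \<not> b), (y, \<not> b)]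
      @ (y, b) # (x, b) # c)"
    using Area_cancel[of R "a @ [(x, b), (y, b)]" z b] by simp
  also have "\<dots> \<le> Area R (a @ [(z, \<not> b), (x, \<not> b), (y, \<not> b)] @ (y, b) # (x, b) # c) + 1"
    by (rule Area_insert_relator) (simp add: assms(1))
  also have "\<dots> \<le> Area R (a @ (y, b) # (x, b) # c) + 1 + 1"
    using Area_insert_relator assms(2) by (metis add_right_mono)
  finally show ?thesis by (simp add: add.assoc)
qed

lemma Area_commute_replicate:
  assumes "[(x, b), (y, b), (z, b)] \<in> R" and "[(z, \<not> b), (x, \<not> b), (y, \<not> b)] \<in> R"
  shows "Area R (a @ (x, b) # replicate j (y, b) @ c)
    \<le> Area R (a @ replicate j (y, b) @ (x, b) # c) + enat (2 * j)"
proof (induction j arbitrary: a)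
  case (Suc j)
  have "Area R (a @ (x, b) # replicate (Suc j) (y, b) @ c)
      \<le> Area R ((a @ [(y, b)]) @ (x, b) # replicate j (y, b) @ c) + 2"
    using Area_commute[OF assms, of a "replicate j (y, b) @ c"] by simp
  also have "\<dots> \<le> Area R ((a @ [(y, b)]) @ replicate j (y, b) @ (x, b) # c) + enat (2 * j) + 2"
    using Suc.IH by (rule add_right_mono)
  finally show ?case by (simp add: add.assoc replicate_app_Cons_same numeral_eq_enat)
qed (simp add: zero_enat_def[symmetric])

lemma Area_replicate_triangle:
  assumes "[(y, b), (z, b), (x, b)] \<in> R" and "[(x, b), (y, b), (z, b)] \<in> R"
    and "[(z, \<not> b), (x, \<not> b), (y, \<not> b)] \<in> R"
  shows "Area R (replicate k (x, b) @ replicate k (y, b) @ replicate k (z, b)) \<le> enat (k * k)"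
proof (induction k)
  case (Suc k)
  let ?X = "replicate k (x, b)" and ?Y = "replicate k (y, b)" and ?Z = "replicate k (z, b)"
  have "Area R (replicate (Suc k) (x, b) @ replicate (Suc k) (y, b) @ replicate (Suc k) (z, b))
      = Area R ((?X @ (x, b) # ?Y) @ [(y, b), (z, b), (x, b)] @ (x, \<not> b) # ?Z)"
    using Area_cancel[of R "?X @ (x, b) # ?Y @ [(y, b), (z, b)]" x b ?Z]
    by (simp add: replicate_append_same[symmetric])
  also have "\<dots> \<le> Area R (?X @ (x, b) # ?Y @ (x, \<not> b) # ?Z) + 1"
    using Area_insert_relator[of "[(y, b), (z, b), (x, b)]" R "?X @ (x, b) # ?Y" "(x, \<not> b) # ?Z"] assms(1)
    by simp
  also have "\<dots> \<le> Area R (?X @ ?Y @ (x, b) # (x, \<not> b) # ?Z) + enat (2 * k) + 1"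
    using Area_commute_replicate[OF assms(2,3)] by (metis add_right_mono)
  also have "\<dots> = Area R (?X @ ?Y @ ?Z) + enat (2 * k) + 1"
    using Area_cancel[of R "?X @ ?Y" x b ?Z] by simp
  also have "\<dots> \<le> enat (k * k) + enat (2 * k) + 1"
    using Suc.IH by (intro add_right_mono)
  also have "\<dots> = enat (Suc k * Suc k)"
    by (simp add: one_enat_def)
  finally show ?case .
qed (simp add: Area_Nil zero_enat_def[symmetric])

lemma Area_replicate_backtrack:
  assumes "[(x, b), (x', b)] \<in> R \<or> inv_word [(x, b), (x', b)] \<in> R"
  shows "Area R (a @ replicate j (x, b) @ replicate j (x', b) @ c) \<le> Area R (a @ c) + enat j"
proof (induction j)
  case (Suc j)
  have "Area R (a @ replicate (Suc j) (x, b) @ replicate (Suc j) (x', b) @ c)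
      = Area R ((a @ replicate j (x, b)) @ [(x, b), (x', b)] @ replicate j (x', b) @ c)"
    by (simp add: replicate_app_Cons_same)
  also have "\<dots> \<le> Area R (a @ replicate j (x, b) @ replicate j (x', b) @ c) + 1"
    using Area_insert_relator[OF assms, of "a @ replicate j (x, b)" "replicate j (x', b) @ c"] by simp
  also have "\<dots> \<le> Area R (a @ c) + enat j + 1"
    using Suc.IH by (rule add_right_mono)
  finally show ?case by (simp add: one_enat_def add.assoc)
qed (simp add: zero_enat_def[symmetric])

lemma rev_edge_rev_edge [simp]: "rev_edge (rev_edge e) = e"
  by (simp add: rev_edge_def)

lemma rev_edge_in_Edge: "e \<in> Edge \<Delta> \<Longrightarrow> rev_edge e \<in> Edge \<Delta>"
  by (auto simp: Edge_def rev_edge_def insert_commute)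

lemma Edge_endpoints_in_vertices:
  assumes "simplicial_complex \<Delta>" and "e \<in> Edge \<Delta>"
  shows "iota e \<in> vertices \<Delta>" and "tau e \<in> vertices \<Delta>"
proof -
  have "{iota e, tau e} \<in> \<Delta>" using assms(2) by (auto simp: Edge_def)
  then have "\<tau> \<subseteq> {iota e, tau e} \<Longrightarrow> \<tau> \<noteq> {} \<Longrightarrow> \<tau> \<in> \<Delta>" for \<tau>
    using assms(1) unfolding simplicial_complex_def by blast
  then show "iota e \<in> vertices \<Delta>" and "tau e \<in> vertices \<Delta>"
    unfolding vertices_def by auto
qed

definition reverse_path :: "'v edge list \<Rightarrow> 'v edge list" where
  "reverse_path es = rev (map rev_edge es)"

fun walk :: "'v edge set \<Rightarrow> 'v \<Rightarrow> 'v edge list \<Rightarrow> 'v \<Rightarrow> bool" where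
  "walk T u [] v \<longleftrightarrow> u = v"
| "walk T u (e # es) v \<longleftrightarrow> e \<in> T \<and> iota e = u \<and> walk T (tau e) es v"

lemma edge_path_Cons_Cons:
  "edge_path T u v (e # f # es) \<longleftrightarrow> e \<in> T \<and> iota e = u \<and> edge_path T (tau e) v (f # es)"
  by (auto simp: edge_path_def)

lemma edge_path_iff_walk: "edge_path T u v es \<longleftrightarrow> walk T u es v"
proof (induction es arbitrary: u rule: chain.induct)
  case (3 e f es)
  then show ?case by (simp add: edge_path_Cons_Cons)
qed (auto simp: edge_path_def)

lemma walk_append: "walk T u (xs @ ys) v \<longleftrightarrow> (\<exists>w. walk T u xs w \<and> walk T w ys v)"
  by (induction xs arbitrary: u) auto

lemma walk_imp_subset: "walk T u es v \<Longrightarrow> set es \<subseteq> T"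
  by (induction es arbitrary: u) auto

lemma walk_reverse_path:
  assumes "\<forall>e\<in>T. rev_edge e \<in> T" and "walk T u es v"
  shows "walk T v (reverse_path es) u"
  using assms by (induction es arbitrary: u) (auto simp: reverse_path_def walk_append rev_edge_def)

lemma no_backtrack_ConsD: "no_backtrack (e # es) \<Longrightarrow> no_backtrack es"
  by (cases es) auto

lemma no_backtrack_append:
  "no_backtrack (xs @ ys) \<longleftrightarrow> no_backtrack xs \<and> no_backtrack ys \<and>
     (xs \<noteq> [] \<longrightarrow> ys \<noteq> [] \<longrightarrow> hd ys \<noteq> rev_edge (last xs))"
proof (induction xs)
  case (Cons e xs)
  then show ?case by (cases xs; cases ys) auto
qed simp

lemma no_backtrack_reverse_path: "no_backtrack es \<Longrightarrow> no_backtrack (reverse_path es)"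
  by (induction es rule: no_backtrack.induct)
    (auto simp: reverse_path_def no_backtrack_append last_rev rev_edge_def)

lemma backtrack_split:
  "\<not> no_backtrack es \<Longrightarrow> \<exists>xs e ys. es = xs @ e # rev_edge e # ys"
proof (induction es rule: no_backtrack.induct)
  case (3 e f es)
  show ?case
  proof (cases "f = rev_edge e")
    case True
    then show ?thesis by (intro exI[of _ "[]"]) simp
  next
    case False
    with 3 obtain xs e' ys where "f # es = xs @ e' # rev_edge e' # ys" by auto
    then show ?thesis by (intro exI[of _ "e # xs"]) simp
  qed
qed auto

lemma shortest_walk_no_backtrack:
  assumes "walk T u es v" and "\<And>es'. walk T u es' v \<Longrightarrow> length es \<le> length es'"
  shows "no_backtrack es"
proof (rule ccontr)
  assume "\<not> no_backtrack es"
  then obtain xs e ys where es: "es = xs @ e # rev_edge e # ys" using backtrack_split by blast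
  then have "walk T u (xs @ ys) v" using assms(1) by (auto simp: walk_append rev_edge_def)
  with assms(2) es show False by fastforce
qed

lemma no_backtrack_walk_unique:
  assumes sym: "\<forall>e\<in>T. rev_edge e \<in> T"
    and acyclic: "\<forall>u es. walk T u es u \<and> es \<noteq> [] \<longrightarrow> \<not> no_backtrack es"
    and "walk T u es v" "walk T u es' v" "no_backtrack es" "no_backtrack es'"
  shows "es = es'"
  using assms(3-)
proof (induction es arbitrary: u es')
  case Nil
  then show ?case using acyclic by auto
next
  case (Cons e es)
  show ?case
  proof (cases "es' = []")
    case True
    then show ?thesis using Cons.prems acyclic by auto
  next
    case False
    then obtain e' es'' where es': "es' = e' # es''" by (meson neq_Nil_conv)
    show ?thesis
    proof (cases "e = e'")
      case True
      have "no_backtrack es" "no_backtrack es''"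
        using no_backtrack_ConsD[OF Cons.prems(3)] no_backtrack_ConsD[of e' es''] Cons.prems(4) es'
        by simp_all
      moreover have "walk T (tau e) es v" "walk T (tau e) es'' v"
        using Cons.prems(1,2) es' True by auto
      ultimately show ?thesis using Cons.IH True es' by simp
    next
      case False
      \<comment> \<open>Two distinct first edges close up to a non-backtracking cycle through v.\<close>
      let ?cycle = "reverse_path es' @ e # es"
      have "walk T v ?cycle v"
        using walk_reverse_path[OF sym Cons.prems(2)] Cons.prems(1) by (auto simp: walk_append)
      moreover have "no_backtrack ?cycle"
        using no_backtrack_reverse_path[OF Cons.prems(4)] Cons.prems(3) False es'
        by (simp add: no_backtrack_append reverse_path_def last_rev)
      ultimately show ?thesis using acyclic by blast
    qed
  qed
qed

lemma spanning_treeD: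
  assumes "spanning_tree \<Delta> T"
  shows "T \<subseteq> Edge \<Delta>" and "\<forall>e\<in>T. rev_edge e \<in> T"
    and "u \<in> vertices \<Delta> \<Longrightarrow> v \<in> vertices \<Delta> \<Longrightarrow> \<exists>es. walk T u es v"
    and "\<forall>u es. walk T u es u \<and> es \<noteq> [] \<longrightarrow> \<not> no_backtrack es"
  using assms by (auto simp: spanning_tree_def edge_path_iff_walk)

lemma tree_geod_eqI:
  assumes T: "spanning_tree \<Delta> T" and "walk T u es v" and "no_backtrack es"
  shows "tree_geod T u v = es"
proof -
  note unique = no_backtrack_walk_unique[OF spanning_treeD(2,4)[OF T]]
  obtain es0 where es0: "walk T u es0 v" "\<And>es'. walk T u es' v \<Longrightarrow> length es0 \<le> length es'"
    using ex_has_least_nat[of "\<lambda>es. walk T u es v" es length] assms(2) by blast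
  have "es0 = es"
    by (rule unique[OF es0(1) assms(2) shortest_walk_no_backtrack[OF es0] assms(3)])
  show ?thesis
    unfolding tree_geod_def edge_path_iff_walk
  proof (rule the_equality)
    show "walk T u es v \<and> (\<forall>es'. walk T u es' v \<longrightarrow> length es \<le> length es')"
      using es0 \<open>es0 = es\<close> by blast
  next
    fix es' assume es': "walk T u es' v \<and> (\<forall>es''. walk T u es'' v \<longrightarrow> length es' \<le> length es'')"
    then have "no_backtrack es'"
      by (intro shortest_walk_no_backtrack) auto
    with es' show "es' = es"
      using unique assms(2,3) by blast
  qed
qed

lemma tree_geod_walk:
  assumes T: "spanning_tree \<Delta> T" and "u \<in> vertices \<Delta>" and "v \<in> vertices \<Delta>"
  shows "walk T u (tree_geod T u v) v" and "no_backtrack (tree_geod T u v)"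
proof -
  obtain es where "walk T u es v" using spanning_treeD(3)[OF T] assms(2,3) by blast
  then obtain es0 where es0: "walk T u es0 v" "\<And>es'. walk T u es' v \<Longrightarrow> length es0 \<le> length es'"
    using ex_has_least_nat[of "\<lambda>es. walk T u es v" es length] by blast
  have "no_backtrack es0" by (rule shortest_walk_no_backtrack[OF es0])
  with es0(1) show "walk T u (tree_geod T u v) v" and "no_backtrack (tree_geod T u v)"
    using tree_geod_eqI[OF T] by simp_all
qed

lemma tree_geod_swap:
  assumes T: "spanning_tree \<Delta> T" and "u \<in> vertices \<Delta>" and "v \<in> vertices \<Delta>"
  shows "tree_geod T v u = reverse_path (tree_geod T u v)"
  using tree_geod_walk[OF assms] walk_reverse_path[OF spanning_treeD(2)[OF T]]
    no_backtrack_reverse_path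
  by (intro tree_geod_eqI[OF T]) auto

lemma set_tree_geod_subset_Edge:
  assumes T: "spanning_tree \<Delta> T" and "u \<in> vertices \<Delta>" and "v \<in> vertices \<Delta>"
  shows "set (tree_geod T u v) \<subseteq> Edge \<Delta>"
  using walk_imp_subset[OF tree_geod_walk(1)[OF assms]] spanning_treeD(1)[OF T] by blast

lemma length_tree_geod_le_tree_diam:
  fixes T :: "('v::finite) edge set"
  assumes "u \<in> vertices \<Delta>" and "v \<in> vertices \<Delta>"
  shows "length (tree_geod T u v) \<le> tree_diam \<Delta> T"
proof -
  have "{length (tree_geod T u v) | u v. u \<in> vertices \<Delta> \<and> v \<in> vertices \<Delta>}
      \<subseteq> (\<lambda>(u, v). length (tree_geod T u v)) ` UNIV"
    by auto
  then have "finite {length (tree_geod T u v) | u v. u \<in> vertices \<Delta> \<and> v \<in> vertices \<Delta>}"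
    by (rule finite_subset) simp
  then show ?thesis
    unfolding tree_diam_def using assms by (intro Max_ge) auto
qed

lemma lpow_eq_replicate: "lpow x m = replicate (nat \<bar>m\<bar>) (x, 0 \<le> m)"
  by (simp add: lpow_def)

lemma comb_cycle3_rotate: "comb_cycle3 \<Delta> e f g \<Longrightarrow> comb_cycle3 \<Delta> f g e"
  unfolding comb_cycle3_def by auto

lemma comb_cycle3_relator: "comb_cycle3 \<Delta> e f g \<Longrightarrow> [(e, b), (f, b), (g, b)] \<in> relators_H \<Delta>"
  unfolding relators_H_def by (cases b) blast+

lemma Edge_relator:
  assumes "e \<in> Edge \<Delta>"
  shows "[(e, b), (rev_edge e, b)] \<in> relators_H \<Delta> \<or> inv_word [(e, b), (rev_edge e, b)] \<in> relators_H \<Delta>"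
proof (cases b)
  case False
  have "[(rev_edge e, True), (rev_edge (rev_edge e), True)] \<in> relators_H \<Delta>"
    using rev_edge_in_Edge[OF assms] unfolding relators_H_def by blast
  with False show ?thesis by simp
next
  case True
  with assms show ?thesis unfolding relators_H_def by blast
qed

lemma Area_lpow_cycle:
  assumes "comb_cycle3 \<Delta> e f g"
  shows "Area (relators_H \<Delta>) (lpow e k @ lpow f k @ lpow g k) \<le> enat (nat \<bar>k\<bar> * nat \<bar>k\<bar>)"
proof -
  have "comb_cycle3 \<Delta> f g e" and "comb_cycle3 \<Delta> g e f"
    using assms comb_cycle3_rotate by blast+
  then show ?thesis
    unfolding lpow_eq_replicate using assms
    by (intro Area_replicate_triangle comb_cycle3_relator)
qed

definition path_word :: "int \<Rightarrow> 'a list \<Rightarrow> 'a word" where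
  "path_word n es = concat (map (\<lambda>e. lpow e n) es)"

lemma Area_path_backtrack:
  assumes "set es \<subseteq> Edge \<Delta>"
  shows "Area (relators_H \<Delta>) (a @ path_word n es @ path_word n (reverse_path es) @ c)
         \<le> Area (relators_H \<Delta>) (a @ c) + enat (nat \<bar>n\<bar> * length es)"
  using assms
proof (induction es arbitrary: a c)
  case (Cons e es)
  let ?R = "relators_H \<Delta>" and ?P = "path_word n"
  have "Area ?R (a @ ?P (e # es) @ ?P (reverse_path (e # es)) @ c)
      = Area ?R ((a @ lpow e n) @ ?P es @ ?P (reverse_path es) @ lpow (rev_edge e) n @ c)"
    by (simp add: reverse_path_def path_word_def)
  also have "\<dots> \<le> Area ?R (a @ lpow e n @ lpow (rev_edge e) n @ c) + enat (nat \<bar>n\<bar> * length es)"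
    using Cons.IH[of "a @ lpow e n" "lpow (rev_edge e) n @ c"] Cons.prems by simp
  also have "\<dots> \<le> Area ?R (a @ c) + enat (nat \<bar>n\<bar>) + enat (nat \<bar>n\<bar> * length es)"
    unfolding lpow_eq_replicate using Cons.prems
    by (intro add_right_mono Area_replicate_backtrack Edge_relator) simp
  finally show ?case by (simp add: add.assoc)
qed (simp add: reverse_path_def path_word_def zero_enat_def[symmetric])

lemma comb_cycle3_vertices:
  assumes "simplicial_complex \<Delta>" and "comb_cycle3 \<Delta> e f g"
  shows "iota e \<in> vertices \<Delta>" and "tau e \<in> vertices \<Delta>" and "tau f \<in> vertices \<Delta>"
proof -
  have "e \<in> Edge \<Delta>" "f \<in> Edge \<Delta>" using assms(2) by (auto simp: comb_cycle3_def)
  then show "iota e \<in> vertices \<Delta>" and "tau e \<in> vertices \<Delta>" and "tau f \<in> vertices \<Delta>"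
    using Edge_endpoints_in_vertices[OF assms(1)] by simp_all
qed

lemma Phi_comb_cycle3:
  assumes "simplicial_complex \<Delta>" and T: "spanning_tree \<Delta> T" and q: "q \<in> vertices \<Delta>"
    and cycle: "comb_cycle3 \<Delta> e f g"
  defines "\<gamma>\<^sub>0 \<equiv> tree_geod T q (iota e)" and "\<gamma>\<^sub>e \<equiv> tree_geod T (tau e) q" and "\<gamma>\<^sub>f \<equiv> tree_geod T (tau f) q"
  shows "Phi T q n [(e, True), (f, True), (g, True)] =
    path_word n \<gamma>\<^sub>0 @ (lpow e (n + 1) @ path_word n \<gamma>\<^sub>e @ path_word n (reverse_path \<gamma>\<^sub>e) @ lpow f (n + 1)
      @ path_word n \<gamma>\<^sub>f @ path_word n (reverse_path \<gamma>\<^sub>f) @ lpow g (n + 1)) @ path_word n (reverse_path \<gamma>\<^sub>0)"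
proof -
  have ends: "tau e = iota f" "tau f = iota g" "tau g = iota e"
    using cycle by (auto simp: comb_cycle3_def)
  have "tree_geod T q (iota f) = reverse_path \<gamma>\<^sub>e" and "tree_geod T q (iota g) = reverse_path \<gamma>\<^sub>f"
    and "tree_geod T (tau g) q = reverse_path \<gamma>\<^sub>0"
    unfolding \<gamma>\<^sub>0_def \<gamma>\<^sub>e_def \<gamma>\<^sub>f_def ends(1,2)[symmetric] ends(3)
    using tree_geod_swap[OF T] q comb_cycle3_vertices[OF assms(1) cycle] by blast+
  then show ?thesis
    by (simp add: Phi_def Phi_letter_def p_path_def path_word_def \<gamma>\<^sub>0_def \<gamma>\<^sub>e_def \<gamma>\<^sub>f_def)
qed

lemma Area_lpow_cycle_backtracks:
  assumes "comb_cycle3 \<Delta> e f g" and "set \<alpha> \<subseteq> Edge \<Delta>" and "set \<beta> \<subseteq> Edge \<Delta>"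
  shows "Area (relators_H \<Delta>) (lpow e m @ path_word n \<alpha> @ path_word n (reverse_path \<alpha>) @ lpow f m
      @ path_word n \<beta> @ path_word n (reverse_path \<beta>) @ lpow g m)
    \<le> enat (nat \<bar>m\<bar> * nat \<bar>m\<bar> + nat \<bar>n\<bar> * length \<beta> + nat \<bar>n\<bar> * length \<alpha>)"
proof -
  let ?R = "relators_H \<Delta>" and ?k = "nat \<bar>n\<bar>"
  have "Area ?R (lpow e m @ path_word n \<alpha> @ path_word n (reverse_path \<alpha>) @ lpow f m
      @ path_word n \<beta> @ path_word n (reverse_path \<beta>) @ lpow g m)
    \<le> Area ?R (lpow e m @ lpow f m @ path_word n \<beta> @ path_word n (reverse_path \<beta>) @ lpow g m)
      + enat (?k * length \<alpha>)"
    by (rule Area_path_backtrack[OF assms(2)])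
  also have "\<dots> \<le> Area ?R (lpow e m @ lpow f m @ lpow g m) + enat (?k * length \<beta>) + enat (?k * length \<alpha>)"
    using Area_path_backtrack[OF assms(3), of "lpow e m @ lpow f m" n "lpow g m"]
    by (simp add: add_right_mono)
  also have "\<dots> \<le> enat (nat \<bar>m\<bar> * nat \<bar>m\<bar> + ?k * length \<beta> + ?k * length \<alpha>)"
    unfolding plus_enat_simps(1)[symmetric] by (intro add_right_mono Area_lpow_cycle[OF assms(1)])
  finally show ?thesis .
qed

lemma Area_Phi_comb_cycle3:
  assumes "simplicial_complex \<Delta>" and T: "spanning_tree \<Delta> T" and q: "q \<in> vertices \<Delta>"
    and cycle: "comb_cycle3 \<Delta> e f g"
  defines "\<gamma>\<^sub>0 \<equiv> tree_geod T q (iota e)" and "\<gamma>\<^sub>e \<equiv> tree_geod T (tau e) q" and "\<gamma>\<^sub>f \<equiv> tree_geod T (tau f) q"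
  shows "Area (relators_H \<Delta>) (Phi T q n [(e, True), (f, True), (g, True)])
    \<le> enat (nat \<bar>n + 1\<bar> * nat \<bar>n + 1\<bar> + nat \<bar>n\<bar> * length \<gamma>\<^sub>f + nat \<bar>n\<bar> * length \<gamma>\<^sub>e
        + nat \<bar>n\<bar> * length \<gamma>\<^sub>0)"
proof -
  note vertices = comb_cycle3_vertices[OF assms(1) cycle]
  note geod_edges = set_tree_geod_subset_Edge[OF T]
  have triangle: "Area (relators_H \<Delta>) (lpow e (n + 1) @ path_word n \<gamma>\<^sub>e @ path_word n (reverse_path \<gamma>\<^sub>e)
      @ lpow f (n + 1) @ path_word n \<gamma>\<^sub>f @ path_word n (reverse_path \<gamma>\<^sub>f) @ lpow g (n + 1))
    \<le> enat (nat \<bar>n + 1\<bar> * nat \<bar>n + 1\<bar> + nat \<bar>n\<bar> * length \<gamma>\<^sub>f + nat \<bar>n\<bar> * length \<gamma>\<^sub>e)"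
    unfolding \<gamma>\<^sub>e_def \<gamma>\<^sub>f_def
    by (rule Area_lpow_cycle_backtracks[OF cycle geod_edges geod_edges]) (use vertices q in simp_all)
  have base: "Area (relators_H \<Delta>) (path_word n \<gamma>\<^sub>0 @ path_word n (reverse_path \<gamma>\<^sub>0))
    \<le> enat (nat \<bar>n\<bar> * length \<gamma>\<^sub>0)"
    using Area_path_backtrack[of \<gamma>\<^sub>0 \<Delta> "[]" n "[]"] geod_edges[OF q vertices(1)]
    by (simp add: Area_Nil \<gamma>\<^sub>0_def)
  from add_mono[OF triangle base] show ?thesis
    unfolding Phi_comb_cycle3[OF assms(1-4), folded \<gamma>\<^sub>0_def \<gamma>\<^sub>e_def \<gamma>\<^sub>f_def]
    by (intro order_trans[OF Area_insert]) simp
qed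

lemma cycle_area_bound_arith:
  fixes n :: int and l\<^sub>1 l\<^sub>2 l\<^sub>3 L :: nat
  assumes "l\<^sub>1 \<le> L" "l\<^sub>2 \<le> L" "l\<^sub>3 \<le> L"
  shows "nat \<bar>n + 1\<bar> * nat \<bar>n + 1\<bar> + nat \<bar>n\<bar> * l\<^sub>1 + nat \<bar>n\<bar> * l\<^sub>2 + nat \<bar>n\<bar> * l\<^sub>3
    \<le> nat (3 * \<bar>n\<bar>^2 + (3 * int L + 6) * \<bar>n\<bar> + 3)"
proof -
  define m where "m = nat \<bar>n\<bar>"
  have "3 * \<bar>n\<bar>^2 + (3 * int L + 6) * \<bar>n\<bar> + 3 = int (3 * m^2 + (3 * L + 6) * m + 3)"
    unfolding m_def by simp
  then have bound: "nat (3 * \<bar>n\<bar>^2 + (3 * int L + 6) * \<bar>n\<bar> + 3) = 3 * m^2 + (3 * L + 6) * m + 3"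
    by (simp only: nat_int)
  have "nat \<bar>n + 1\<bar> \<le> m + 1" unfolding m_def by (simp add: nat_le_iff)
  then have "nat \<bar>n + 1\<bar> * nat \<bar>n + 1\<bar> \<le> (m + 1) * (m + 1)" using mult_le_mono by blast
  moreover have "m * l\<^sub>1 \<le> m * L" "m * l\<^sub>2 \<le> m * L" "m * l\<^sub>3 \<le> m * L"
    using assms by simp_all
  moreover have "(m + 1) * (m + 1) + 3 * (m * L) \<le> 3 * m^2 + (3 * L + 6) * m + 3"
    by (simp add: algebra_simps power2_eq_square)
  ultimately show ?thesis unfolding bound m_def[symmetric] by linarith
qed

theorem lemma4p4:
  fixes \<Delta> :: "('v::finite) set set"
    and T :: "'v edge set" and q :: 'v and e f g :: "'v edge"
  assumes "simplicial_complex \<Delta>" and "finite \<Delta>" and "flag \<Delta>"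
    and "simply_connected (realization \<Delta>)"
    and "q \<in> vertices \<Delta>" and "spanning_tree \<Delta> T"
    and "comb_cycle3 \<Delta> e f g"
  shows "\<forall>n::int. Area (relators_H \<Delta>) (Phi T q n [(e, True), (f, True), (g, True)])
           \<le> enat (nat (3 * \<bar>n\<bar>^2 + (3 * int (tree_diam \<Delta> T) + 6) * \<bar>n\<bar> + 3))"
proof
  fix n :: int
  note vertices = comb_cycle3_vertices[OF assms(1,7)]
  have "Area (relators_H \<Delta>) (Phi T q n [(e, True), (f, True), (g, True)])
      \<le> enat (nat \<bar>n + 1\<bar> * nat \<bar>n + 1\<bar> + nat \<bar>n\<bar> * length (tree_geod T (tau f) q)
          + nat \<bar>n\<bar> * length (tree_geod T (tau e) q) + nat \<bar>n\<bar> * length (tree_geod T q (iota e)))"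
    by (rule Area_Phi_comb_cycle3[OF assms(1,6,5,7)])
  also have "\<dots> \<le> enat (nat (3 * \<bar>n\<bar>^2 + (3 * int (tree_diam \<Delta> T) + 6) * \<bar>n\<bar> + 3))"
    unfolding enat_ord_simps
    by (intro cycle_area_bound_arith length_tree_geod_le_tree_diam vertices assms(5))
  finally show "Area (relators_H \<Delta>) (Phi T q n [(e, True), (f, True), (g, True)])
      \<le> enat (nat (3 * \<bar>n\<bar>^2 + (3 * int (tree_diam \<Delta> T) + 6) * \<bar>n\<bar> + 3))" .
qed

end
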